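(* Let $\epsilon>0$, $n\ge1$, and let $\phi:\{0,1,\dots,n\}\to(0,1)$. The following are equivalent: (1) There exists $m\in(0,1)$ such that $\phi_0=m$ and $\phi_x=\min\{e^\epsilon\phi_{x-1},\,1-e^{-\epsilon}(1-\phi_{x-1})\}$ for $x=1,\dots,n$. (2) There exists $m\in(0,1)$ such that $\phi_0=m$ and for $x=1,\dots,n$, $\phi_x=e^\epsilon\phi_{x-1}$ if $\phi_{x-1}\le\frac1{1+e^\epsilon}$ and $\phi_x=1-e^{-\epsilon}(1-\phi_{x-1})$ if $\phi_{x-1}>\frac1{1+e^\epsilon}$. (3) There exists $m\in\mathbb{R}$ such that $\phi_x=F_{N_0}(x-m)$ for $x=0,1,\dots,n$, where $N_0\sim\mathrm{Tulap}(0,b=e^{-\epsilon},0)$.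
   Context: Nearest integer function: $[t]$ is the integer nearest to $t$, with $[z+1/2]$ ($z\in\mathbb{Z}$) defined as the nearest even integer. For $b\in(0,1)$, $N_0\sim\mathrm{Tulap}(0,b,0)$ has cdf $F_{N_0}(x)=\frac{b^{-[x]}}{1+b}\big(b+(x-[x]+\tfrac12)(1-b)\big)$ for $x\le 0$ and $F_{N_0}(x)=1-\frac{b^{[x]}}{1+b}\big(b+([x]-x+\tfrac12)(1-b)\big)$ for $x>0$. *)

theory Defs
  imports Complex_Main
begin

definition nearest_int :: "real \<Rightarrow> int" where
  "nearest_int t =
     (if t - of_int \<lfloor>t\<rfloor> < 1/2 then \<lfloor>t\<rfloor>
      else if t - of_int \<lfloor>t\<rfloor> > 1/2 then \<lfloor>t\<rfloor> + 1
      else if even \<lfloor>t\<rfloor> then \<lfloor>t\<rfloor> else \<lfloor>t\<rfloor> + 1)"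

definition tulap_cdf :: "real \<Rightarrow> real \<Rightarrow> real" where
  "tulap_cdf b x =
     (if x \<le> 0
      then b powi (- nearest_int x) / (1 + b) * (b + (x - of_int (nearest_int x) + 1/2) * (1 - b))
      else 1 - b powi (nearest_int x) / (1 + b) * (b + (of_int (nearest_int x) - x + 1/2) * (1 - b)))"

end

theory Submission
  imports Defs
begin

text \<open>On every interval [k - 1/2, k + 1/2] the Tulap cdf F is affine, and comparing neighbouring
  pieces gives F(s) = b F(s + 1) for s \<le> -1/2 and 1 - F(s + 1) = b (1 - F(s)) for s \<ge> -1/2.
  Since F(s) \<le> b / (1 + b) exactly when s \<le> -1/2, for b = exp (-\<epsilon>) this says F(s + 1) = g(F(s)),
  where g is the map of (2). Hence x \<mapsto> F(x - m) solves (2), and every solution of (2) is of this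
  form because F attains every value in (0,1), in particular \<phi> 0. Statement (1) is (2) because
  the minimum in (1) is its first argument exactly when \<phi> (x - 1) \<le> 1 / (1 + exp \<epsilon>).\<close>

definition tulap_left :: "real \<Rightarrow> int \<Rightarrow> real \<Rightarrow> real" where
  "tulap_left b k s = b powi (- k) / (1 + b) * (b + (s - of_int k + 1/2) * (1 - b))"

definition tulap_right :: "real \<Rightarrow> int \<Rightarrow> real \<Rightarrow> real" where
  "tulap_right b k s = 1 - b powi k / (1 + b) * (b + (of_int k - s + 1/2) * (1 - b))"

lemma nearest_int_dist: "\<bar>s - of_int (nearest_int s)\<bar> \<le> 1/2"
  unfolding nearest_int_def using floor_correct[of s] by (auto split: if_splits)

lemma tulap_left_half_integer:
  assumes "b \<noteq> 0"
  shows "tulap_left b k (of_int k + 1/2) = tulap_left b (k + 1) (of_int k + 1/2)"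
proof -
  have "b powi (- k) = b powi (- (k + 1)) * b"
    using assms power_int_add_1[of b "- (k + 1)"] by simp
  then show ?thesis unfolding tulap_left_def by (simp add: field_simps)
qed

lemma tulap_right_half_integer:
  assumes "b \<noteq> 0"
  shows "tulap_right b k (of_int k + 1/2) = tulap_right b (k + 1) (of_int k + 1/2)"
proof -
  have "b powi (k + 1) = b powi k * b"
    using assms by (simp add: power_int_add_1)
  then show ?thesis unfolding tulap_right_def by (simp add: field_simps)
qed

text \<open>Neighbouring pieces agree at the half-integer between them, so the tie-breaking rule
  of nearest_int does not matter.\<close>
lemma tulap_cdf_piece:
  assumes "b \<noteq> 0" and "\<bar>s - of_int k\<bar> \<le> 1/2"
  shows "tulap_cdf b s = (if s \<le> 0 then tulap_left b k s else tulap_right b k s)"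
proof -
  define j where "j = nearest_int s"
  have j: "\<bar>s - of_int j\<bar> \<le> 1/2"
    unfolding j_def by (rule nearest_int_dist)
  then have "\<bar>j - k\<bar> \<le> 1"
    using assms(2) by linarith
  then consider "j = k" | "j = k + 1" "s = of_int k + 1/2" | "k = j + 1" "s = of_int j + 1/2"
    using j assms(2) by linarith
  moreover have "tulap_cdf b s = (if s \<le> 0 then tulap_left b j s else tulap_right b j s)"
    unfolding tulap_cdf_def tulap_left_def tulap_right_def j_def by simp
  ultimately show ?thesis
    using tulap_left_half_integer[OF assms(1)] tulap_right_half_integer[OF assms(1)] by cases auto
qed

lemma tulap_left_zero: "b \<noteq> -1 \<Longrightarrow> tulap_left b 0 s = tulap_right b 0 s"
  unfolding tulap_left_def tulap_right_def by (simp add: field_simps)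

lemma tulap_left_minus: "tulap_left b (- k) (- s) = 1 - tulap_right b k s"
  unfolding tulap_left_def tulap_right_def by simp

lemma tulap_left_shift:
  assumes "b \<noteq> 0"
  shows "tulap_left b k s = b * tulap_left b (k + 1) (s + 1)"
proof -
  have "b powi (- k) = b powi (- (k + 1)) * b"
    using assms power_int_add_1[of b "- (k + 1)"] by simp
  then show ?thesis unfolding tulap_left_def by (simp add: field_simps)
qed

lemma tulap_cdf_nonpos_piece:
  assumes "b > 0" and "k \<le> 0" and "\<bar>s - of_int k\<bar> \<le> 1/2"
  shows "tulap_cdf b s = tulap_left b k s"
proof (cases "s \<le> 0")
  case False
  then have "k = 0" using assms(2,3) by linarith
  then show ?thesis
    using False tulap_cdf_piece[of b s k] assms tulap_left_zero[of b s] by simp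
qed (use tulap_cdf_piece[of b s k] assms in simp)

lemma tulap_cdf_nonneg_piece:
  assumes "b > 0" and "k \<ge> 0" and "\<bar>s - of_int k\<bar> \<le> 1/2"
  shows "tulap_cdf b s = tulap_right b k s"
proof (cases "s \<le> 0")
  case True
  then have "k = 0" using assms(2,3) by linarith
  then show ?thesis
    using True tulap_cdf_piece[of b s k] assms tulap_left_zero[of b s] by simp
qed (use tulap_cdf_piece[of b s k] assms in simp)

lemma tulap_cdf_minus:
  assumes "b > 0"
  shows "tulap_cdf b (- s) = 1 - tulap_cdf b s"
proof -
  define k where "k = nearest_int s"
  have k: "\<bar>s - of_int k\<bar> \<le> 1/2"
    unfolding k_def by (rule nearest_int_dist)
  then have k': "\<bar>- s - of_int (- k)\<bar> \<le> 1/2"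
    by linarith
  show ?thesis
  proof (cases "k \<ge> 0")
    case True
    then show ?thesis
      using tulap_cdf_nonneg_piece[OF assms True k] tulap_cdf_nonpos_piece[OF assms _ k']
      by (simp add: tulap_left_minus)
  next
    case False
    then show ?thesis
      using tulap_cdf_nonpos_piece[OF assms _ k] tulap_cdf_nonneg_piece[OF assms _ k']
        tulap_left_minus[of b "- k" "- s"]
      by simp
  qed
qed

lemma tulap_cdf_shift_lower:
  assumes "b > 0" and "s \<le> -1/2"
  shows "tulap_cdf b s = b * tulap_cdf b (s + 1)"
proof -
  define k where "k = \<lceil>s - 1/2\<rceil>"
  have k: "\<bar>s - of_int k\<bar> \<le> 1/2" "k \<le> -1"
    using ceiling_correct[of "s - 1/2"] assms(2) unfolding k_def by linarith+
  have "tulap_cdf b s = tulap_left b k s"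
    using tulap_cdf_nonpos_piece[OF assms(1), of k s] k by simp
  also have "\<dots> = b * tulap_left b (k + 1) (s + 1)"
    using assms(1) by (intro tulap_left_shift) simp
  also have "tulap_left b (k + 1) (s + 1) = tulap_cdf b (s + 1)"
    using tulap_cdf_nonpos_piece[OF assms(1), of "k + 1" "s + 1"] k by simp
  finally show ?thesis .
qed

lemma tulap_cdf_shift_upper:
  assumes "b > 0" and "s \<ge> -1/2"
  shows "1 - tulap_cdf b (s + 1) = b * (1 - tulap_cdf b s)"
proof -
  have "tulap_cdf b (- (s + 1)) = b * tulap_cdf b (- s)"
    using tulap_cdf_shift_lower[OF assms(1), of "- (s + 1)"] assms(2) by simp
  then show ?thesis
    unfolding tulap_cdf_minus[OF assms(1)] by (simp add: algebra_simps)
qed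

lemma tulap_cdf_less_below_half:
  assumes "0 < b" "b < 1" and "u < 1/2"
  shows "tulap_cdf b u < 1 / (1 + b)"
proof -
  define k where "k = \<lfloor>u + 1/2\<rfloor>"
  have k: "\<bar>u - of_int k\<bar> \<le> 1/2" "k \<le> 0"
    using floor_correct[of "u + 1/2"] assms(3) unfolding k_def by linarith+
  then obtain j :: nat where j: "k = - int j"
    by (metis minus_minus neg_0_le_iff_le nonneg_eq_int)
  define t where "t = u - of_int k + 1/2"
  have t: "0 \<le> t" "t < 1"
    using floor_correct[of "u + 1/2"] unfolding t_def k_def by linarith+
  have "t * (1 - b) < 1 * (1 - b)"
    using t assms(2) by (intro mult_strict_right_mono) auto
  moreover have "b ^ j * (b + t * (1 - b)) \<le> b + t * (1 - b)"
    using t assms(1,2) by (intro mult_left_le_one_le) (simp_all add: power_le_one)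
  ultimately have "b ^ j * (b + t * (1 - b)) < 1"
    by simp
  moreover have "tulap_cdf b u = b ^ j / (1 + b) * (b + t * (1 - b))"
    using tulap_cdf_nonpos_piece[OF assms(1) k(2,1)] unfolding tulap_left_def t_def j by simp
  ultimately show ?thesis
    using assms(1) by (simp add: divide_strict_right_mono)
qed

lemma tulap_cdf_le_iff:
  assumes "0 < b" "b < 1"
  shows "tulap_cdf b s \<le> b / (1 + b) \<longleftrightarrow> s \<le> -1/2"
proof
  have half: "tulap_cdf b (1/2) = 1 / (1 + b)"
    using tulap_cdf_nonneg_piece[OF assms(1), of 0 "1/2"] assms(1)
    unfolding tulap_right_def by (simp add: field_simps)
  assume "s \<le> -1/2"
  then have "tulap_cdf b (s + 1) \<le> 1 / (1 + b)"
    using tulap_cdf_less_below_half[OF assms, of "s + 1"] half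
    by (cases "s = -1/2") (auto simp: add_divide_distrib)
  then show "tulap_cdf b s \<le> b / (1 + b)"
    using tulap_cdf_shift_lower[OF assms(1) \<open>s \<le> -1/2\<close>] assms(1)
    by (simp add: mult_left_mono divide_inverse)
next
  assume "tulap_cdf b s \<le> b / (1 + b)"
  moreover have "1 - 1 / (1 + b) = b / (1 + b)"
    using assms(1) by (simp add: field_simps)
  ultimately show "s \<le> -1/2"
    using tulap_cdf_less_below_half[OF assms, of "- s"] tulap_cdf_minus[OF assms(1), of s]
    by (cases "s \<le> -1/2") auto
qed

definition tulap_step :: "real \<Rightarrow> real \<Rightarrow> real" where
  "tulap_step \<epsilon> p = (if p \<le> 1 / (1 + exp \<epsilon>) then exp \<epsilon> * p else 1 - exp (- \<epsilon>) * (1 - p))"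

lemma tulap_cdf_step:
  assumes "\<epsilon> > 0"
  shows "tulap_cdf (exp (- \<epsilon>)) (s + 1) = tulap_step \<epsilon> (tulap_cdf (exp (- \<epsilon>)) s)"
proof -
  define b where "b = exp (- \<epsilon>)"
  have b: "0 < b" "b < 1"
    unfolding b_def using assms by auto
  have eb: "exp \<epsilon> * b = 1"
    unfolding b_def by (simp add: exp_minus)
  then have e: "exp \<epsilon> = 1 / b"
    using b by (simp add: field_simps)
  have threshold: "1 / (1 + exp \<epsilon>) = b / (1 + b)"
    unfolding e using b by (simp add: field_simps)
  have step: "tulap_step \<epsilon> p = (if p \<le> b / (1 + b) then exp \<epsilon> * p else 1 - b * (1 - p))" for p
    unfolding tulap_step_def threshold b_def ..
  have "tulap_cdf b (s + 1) = tulap_step \<epsilon> (tulap_cdf b s)"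
  proof (cases "s \<le> -1/2")
    case True
    have "tulap_cdf b (s + 1) = exp \<epsilon> * b * tulap_cdf b (s + 1)"
      using eb by simp
    also have "\<dots> = exp \<epsilon> * tulap_cdf b s"
      using tulap_cdf_shift_lower[OF b(1) True] by simp
    finally show ?thesis
      using True tulap_cdf_le_iff[OF b] by (simp add: step)
  next
    case False
    then show ?thesis
      using tulap_cdf_shift_upper[OF b(1), of s] tulap_cdf_le_iff[OF b, of s] by (simp add: step)
  qed
  then show ?thesis
    unfolding b_def .
qed

lemma tulap_cdf_attains_central:
  assumes "0 < b" "b < 1" and "b / (1 + b) \<le> p" "p \<le> 1 / (1 + b)"
  shows "\<exists>t. \<bar>t\<bar> \<le> 1/2 \<and> tulap_cdf b t = p"
proof -
  define t where "t = (p * (1 + b) - b) / (1 - b) - 1/2"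
  have p: "b \<le> p * (1 + b)" "p * (1 + b) \<le> 1"
    using assms by (simp_all add: field_simps)
  then have "0 \<le> t + 1/2" "t + 1/2 \<le> 1"
    unfolding t_def using assms(2) by (simp_all add: field_simps)
  then have "\<bar>t\<bar> \<le> 1/2"
    by linarith
  moreover have "(t + 1/2) * (1 - b) = p * (1 + b) - b"
    unfolding t_def using assms(2) by simp
  then have "tulap_cdf b t = p"
    using tulap_cdf_nonpos_piece[OF assms(1), of 0 t] \<open>\<bar>t\<bar> \<le> 1/2\<close> assms(1)
    unfolding tulap_left_def by simp
  ultimately show ?thesis
    by blast
qed

lemma tulap_cdf_attains_lower:
  assumes "0 < b" "b < 1" and "0 < p" "p \<le> 1 / (1 + b)"
  shows "\<exists>t \<le> 1/2. tulap_cdf b t = p"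
proof -
  have central: "\<exists>t \<le> 1/2. tulap_cdf b t = p" if "b / (1 + b) \<le> p" "p \<le> 1 / (1 + b)" for p
    using tulap_cdf_attains_central[OF assms(1,2) that] by (metis abs_le_D1)
  have reach: "\<exists>t \<le> 1/2. tulap_cdf b t = p" if "b ^ N * (b / (1 + b)) \<le> p" "p \<le> 1 / (1 + b)" for N p
    using that
  proof (induction N arbitrary: p)
    case 0
    then show ?case
      using central by simp
  next
    case (Suc N)
    show ?case
    proof (cases "b / (1 + b) \<le> p")
      case True
      then show ?thesis
        using central Suc.prems(2) by blast
    next
      case False
      have "b ^ N * (b / (1 + b)) \<le> p / b" "p / b \<le> 1 / (1 + b)"
        using Suc.prems(1) False assms(1) by (simp_all add: field_simps)
      then obtain t where t: "t \<le> 1/2" "tulap_cdf b t = p / b"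
        using Suc.IH by blast
      then have "tulap_cdf b (t - 1) = p"
        using tulap_cdf_shift_lower[OF assms(1), of "t - 1"] assms(1) by simp
      then show ?thesis
        using t(1) by (intro exI[of _ "t - 1"]) simp
    qed
  qed
  obtain N where "b ^ N < p"
    using real_arch_pow_inv[OF assms(3,2)] by blast
  moreover have "b ^ N * (b / (1 + b)) \<le> b ^ N"
    by (rule mult_left_le) (use assms(1) in simp_all)
  ultimately have "b ^ N * (b / (1 + b)) \<le> p"
    by linarith
  then show ?thesis
    using reach assms(4) by blast
qed

lemma tulap_cdf_attains:
  assumes "0 < b" "b < 1" and "0 < p" "p < 1"
  shows "\<exists>t. tulap_cdf b t = p"
proof (cases "p \<le> 1 / (1 + b)")
  case True
  then show ?thesis
    using tulap_cdf_attains_lower[OF assms(1-3)] by blast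
next
  case False
  then have "1 - p \<le> 1 / (1 + b)"
    using assms(1,2) by (simp add: field_simps)
  then obtain t where "tulap_cdf b t = 1 - p"
    using tulap_cdf_attains_lower[OF assms(1,2), of "1 - p"] assms(4) by auto
  then show ?thesis
    using tulap_cdf_minus[OF assms(1), of t] by auto
qed

lemma min_eq_tulap_step:
  assumes "\<epsilon> \<ge> 0"
  shows "min (exp \<epsilon> * p) (1 - exp (- \<epsilon>) * (1 - p)) = tulap_step \<epsilon> p"
proof -
  define e where "e = exp \<epsilon>"
  have e: "e \<ge> 1" "exp (- \<epsilon>) = 1 / e"
    unfolding e_def using assms by (simp_all add: exp_minus inverse_eq_divide)
  have diff: "(1 - (1 - p) / e) - e * p = (e - 1) * (1 - (1 + e) * p) / e"
    using e(1) by (simp add: field_simps)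
  show ?thesis
  proof (cases "p \<le> 1 / (1 + e)")
    case True
    then have "(1 + e) * p \<le> 1"
      using e(1) by (simp add: field_simps)
    then have "0 \<le> (e - 1) * (1 - (1 + e) * p) / e"
      using e(1) by simp
    then have "e * p \<le> 1 - (1 - p) / e"
      using diff by linarith
    then show ?thesis
      using True unfolding tulap_step_def e_def[symmetric] e(2) by simp
  next
    case False
    then have "(1 + e) * p \<ge> 1"
      using e(1) by (simp add: field_simps)
    then have "(e - 1) * (1 - (1 + e) * p) / e \<le> 0"
      using e(1) by (simp add: divide_nonpos_pos mult_nonneg_nonpos)
    then have "1 - (1 - p) / e \<le> e * p"
      using diff by linarith
    then show ?thesis
      using False unfolding tulap_step_def e_def[symmetric] e(2) by simp
  qed
qed

lemma shift_orbit_iff_recurrence: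
  fixes F :: "real \<Rightarrow> 'a"
  assumes "\<And>s. F (s + 1) = g (F s)"
  shows "(\<forall>x\<le>n. \<phi> x = F (real x + t)) \<longleftrightarrow> \<phi> 0 = F t \<and> (\<forall>x\<in>{1..n}. \<phi> x = g (\<phi> (x - 1)))"
proof
  assume orbit: "\<forall>x\<le>n. \<phi> x = F (real x + t)"
  have "\<phi> x = g (\<phi> (x - 1))" if "x \<in> {1..n}" for x
  proof -
    have "\<phi> x = F (real x + t)"
      using orbit that by simp
    also have "real x + t = (real (x - 1) + t) + 1"
      using that by (simp add: of_nat_diff)
    also have "F \<dots> = g (F (real (x - 1) + t))"
      by (rule assms)
    also have "F (real (x - 1) + t) = \<phi> (x - 1)"
      using that by (intro orbit[rule_format, symmetric]) auto
    finally show ?thesis .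
  qed
  then show "\<phi> 0 = F t \<and> (\<forall>x\<in>{1..n}. \<phi> x = g (\<phi> (x - 1)))"
    using orbit by simp
next
  assume rec: "\<phi> 0 = F t \<and> (\<forall>x\<in>{1..n}. \<phi> x = g (\<phi> (x - 1)))"
  have "x \<le> n \<longrightarrow> \<phi> x = F (real x + t)" for x
  proof (induction x)
    case (Suc x)
    show ?case
    proof
      assume "Suc x \<le> n"
      then have "\<phi> (Suc x) = g (\<phi> x)"
        using rec by force
      also have "\<dots> = F ((real x + t) + 1)"
        using Suc \<open>Suc x \<le> n\<close> assms by simp
      finally show "\<phi> (Suc x) = F (real (Suc x) + t)"
        by (simp add: ac_simps)
    qed
  qed (use rec in simp)
  then show "\<forall>x\<le>n. \<phi> x = F (real x + t)"
    by blast
qed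

theorem lemma3:
  fixes \<epsilon> :: real and n :: nat and \<phi> :: "nat \<Rightarrow> real"
  assumes "\<epsilon> > 0" and "n \<ge> 1"
    and "\<forall>x\<le>n. 0 < \<phi> x \<and> \<phi> x < 1"
  shows "((\<exists>m. 0 < m \<and> m < 1 \<and> \<phi> 0 = m \<and>
             (\<forall>x\<in>{1..n}. \<phi> x = min (exp \<epsilon> * \<phi> (x - 1)) (1 - exp (- \<epsilon>) * (1 - \<phi> (x - 1)))))
          \<longleftrightarrow>
          (\<exists>m. 0 < m \<and> m < 1 \<and> \<phi> 0 = m \<and>
             (\<forall>x\<in>{1..n}. \<phi> x = (if \<phi> (x - 1) \<le> 1 / (1 + exp \<epsilon>)
                                     then exp \<epsilon> * \<phi> (x - 1)
                                     else 1 - exp (- \<epsilon>) * (1 - \<phi> (x - 1))))))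
       \<and>
         ((\<exists>m. 0 < m \<and> m < 1 \<and> \<phi> 0 = m \<and>
             (\<forall>x\<in>{1..n}. \<phi> x = (if \<phi> (x - 1) \<le> 1 / (1 + exp \<epsilon>)
                                     then exp \<epsilon> * \<phi> (x - 1)
                                     else 1 - exp (- \<epsilon>) * (1 - \<phi> (x - 1)))))
          \<longleftrightarrow>
          (\<exists>m::real. \<forall>x\<le>n. \<phi> x = tulap_cdf (exp (- \<epsilon>)) (real x - m)))"
proof -
  define b where "b = exp (- \<epsilon>)"
  have b: "0 < b" "b < 1"
    unfolding b_def using assms(1) by auto
  have \<phi>0: "0 < \<phi> 0" "\<phi> 0 < 1"
    using assms(3) by simp_all
  have step: "tulap_cdf b (s + 1) = tulap_step \<epsilon> (tulap_cdf b s)" for s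
    unfolding b_def using assms(1) by (rule tulap_cdf_step)
  have orbit: "(\<forall>x\<le>n. \<phi> x = tulap_cdf b (real x - m)) \<longleftrightarrow>
      \<phi> 0 = tulap_cdf b (- m) \<and> (\<forall>x\<in>{1..n}. \<phi> x = tulap_step \<epsilon> (\<phi> (x - 1)))" for m
    using shift_orbit_iff_recurrence[of "tulap_cdf b", OF step, of n \<phi> "- m"] by simp
  have "(\<exists>m. 0 < m \<and> m < 1 \<and> \<phi> 0 = m \<and> (\<forall>x\<in>{1..n}. \<phi> x = tulap_step \<epsilon> (\<phi> (x - 1))))
      \<longleftrightarrow> (\<exists>m. \<forall>x\<le>n. \<phi> x = tulap_cdf b (real x - m))"
  proof
    assume "\<exists>m. 0 < m \<and> m < 1 \<and> \<phi> 0 = m \<and> (\<forall>x\<in>{1..n}. \<phi> x = tulap_step \<epsilon> (\<phi> (x - 1)))"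
    then have rec: "\<forall>x\<in>{1..n}. \<phi> x = tulap_step \<epsilon> (\<phi> (x - 1))"
      by blast
    obtain t where "tulap_cdf b t = \<phi> 0"
      using tulap_cdf_attains[OF b] \<phi>0 by metis
    then have "\<forall>x\<le>n. \<phi> x = tulap_cdf b (real x - (- t))"
      using orbit[of "- t"] rec by simp
    then show "\<exists>m. \<forall>x\<le>n. \<phi> x = tulap_cdf b (real x - m)" ..
  next
    assume "\<exists>m. \<forall>x\<le>n. \<phi> x = tulap_cdf b (real x - m)"
    then obtain m where "\<forall>x\<le>n. \<phi> x = tulap_cdf b (real x - m)" ..
    then have "\<forall>x\<in>{1..n}. \<phi> x = tulap_step \<epsilon> (\<phi> (x - 1))"
      using orbit[of m] by blast
    then show "\<exists>m. 0 < m \<and> m < 1 \<and> \<phi> 0 = m \<and> (\<forall>x\<in>{1..n}. \<phi> x = tulap_step \<epsilon> (\<phi> (x - 1)))"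
      using \<phi>0 by blast
  qed
  moreover have "min (exp \<epsilon> * p) (1 - exp (- \<epsilon>) * (1 - p)) = tulap_step \<epsilon> p" for p
    using assms(1) by (simp add: min_eq_tulap_step)
  ultimately show ?thesis
    unfolding tulap_step_def[symmetric] b_def by simp
qed

end
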